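(* Let $X$ be a real Banach space, let $c>0$ and let $(x_k)$ be a weakly null sequence in $X$ with $\widetilde{\operatorname{wu}}(x_k)>c$. Then there is a subsequence of $(x_k)$ generating an $\ell_1$-spreading model with constant $\frac c2$.
   Context: For a sequence $(y_k)$ weakly converging to $y$, $\operatorname{wu}(y_k)$ is the infimum of all $\varepsilon>0$ for which there is $n\in\mathbb N$ with $\#\{k\in\mathbb N:|x^*(y_k-y)|>\varepsilon\}\le n$ for all $x^*\in B_{X^*}$; $\widetilde{\operatorname{wu}}(x_k)=\inf\{\operatorname{wu}(x_{k_n}):(x_{k_n})\text{ a subsequence of }(x_k)\}$. A bounded sequence $(z_k)$ generates an $\ell_1$-spreading model with constant $\delta>0$ if $\|\sum_{i\in F}\alpha_i z_i\|\ge\delta\sum_{i\in F}|\alpha_i|$ for every finite $F\subset\mathbb N$ with $\#F\le\min F$ and all real scalars $(\alpha_i)_{i\in F}$. *)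

theory Defs
  imports "HOL-Analysis.Analysis"
begin

definition weakly_converges :: "(nat \<Rightarrow> 'a::real_normed_vector) \<Rightarrow> 'a \<Rightarrow> bool" where
  "weakly_converges x y \<longleftrightarrow>
     (\<forall>f :: 'a \<Rightarrow>\<^sub>L real. (\<lambda>k. blinfun_apply f (x k)) \<longlonglongrightarrow> blinfun_apply f y)"

text \<open>wu(y_k) for a sequence converging weakly to y; valued in ereal so the infimum
  over an empty set would be \<infinity> (it is never empty for weakly convergent sequences).\<close>
definition wu :: "(nat \<Rightarrow> 'a::real_normed_vector) \<Rightarrow> 'a \<Rightarrow> ereal" where
  "wu x y = Inf {ereal \<epsilon> | \<epsilon>. \<epsilon> > 0 \<and>
      (\<exists>n::nat. \<forall>f :: 'a \<Rightarrow>\<^sub>L real. norm f \<le> 1 \<longrightarrow>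
         finite {k. \<bar>blinfun_apply f (x k - y)\<bar> > \<epsilon>} \<and>
         card {k. \<bar>blinfun_apply f (x k - y)\<bar> > \<epsilon>} \<le> n)}"

definition wu_tilde :: "(nat \<Rightarrow> 'a::real_normed_vector) \<Rightarrow> 'a \<Rightarrow> ereal" where
  "wu_tilde x y = Inf {wu (x \<circ> r) y | r. strict_mono r}"

text \<open>The paper indexes sequences from 1; Isabelle sequences
  are indexed from 0, so the paper's index i corresponds to Isabelle index i-1 and
  the condition #F \<le> min F becomes card F \<le> Min F + 1.\<close>
definition generates_l1_spreading_model :: "(nat \<Rightarrow> 'a::real_normed_vector) \<Rightarrow> real \<Rightarrow> bool" where
  "generates_l1_spreading_model z \<delta> \<longleftrightarrow>
     bounded (range z) \<and>
     (\<forall>F::nat set. \<forall>\<alpha>::nat \<Rightarrow> real. finite F \<and> F \<noteq> {} \<and> card F \<le> Min F + 1 \<longrightarrow>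
        norm (\<Sum>i\<in>F. \<alpha> i *\<^sub>R z i) \<ge> \<delta> * (\<Sum>i\<in>F. \<bar>\<alpha> i\<bar>))"

end

theory Submission
  imports Defs
begin

text \<open>Choose b with c < b < wu_tilde x 0 and put \<eta> = b - c. Because wu_tilde x 0 > b, inside
  every infinite set of indices some functional of norm at most 1 is \<ge> b on arbitrarily many x i.
  Because x is weakly null, Mazur's lemma shows that no such functional can be > \<eta> on a long
  initial segment of an infinite set of indices. A diagonal (Ramsey-type) construction combines the
  two and yields a subsequence along which, for every admissible F (card F \<le> min F) and every
  G \<subseteq> F, some functional of norm at most 1 is \<ge> b on the terms indexed by G and \<le> \<eta> on
  those indexed by F - G. Testing \<Sum> \<alpha>i xi with such functionals for the positive and for the
  negative coefficients gives 2 norm (\<Sum> \<alpha>i xi) \<ge> (b - \<eta>) \<Sum> \<bar>\<alpha>i\<bar> = c \<Sum> \<bar>\<alpha>i\<bar>.\<close>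

section \<open>Hahn-Banach and separation in normed spaces\<close>

definition dominated_linear_graph :: "('a::real_vector \<Rightarrow> real) \<Rightarrow> ('a \<times> real) set \<Rightarrow> bool" where
  "dominated_linear_graph p G \<longleftrightarrow>
     (\<forall>x a b. (x, a) \<in> G \<longrightarrow> (x, b) \<in> G \<longrightarrow> a = b) \<and> (0, 0) \<in> G \<and>
     (\<forall>x a y b. (x, a) \<in> G \<longrightarrow> (y, b) \<in> G \<longrightarrow> (x + y, a + b) \<in> G) \<and>
     (\<forall>x a t. (x, a) \<in> G \<longrightarrow> (t *\<^sub>R x, t * a) \<in> G) \<and>
     (\<forall>x a. (x, a) \<in> G \<longrightarrow> a \<le> p x)"

lemma dominated_linear_graphD:
  assumes "dominated_linear_graph p G"
  shows dominated_linear_graph_unique: "(x, a) \<in> G \<Longrightarrow> (x, b) \<in> G \<Longrightarrow> a = b"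
    and dominated_linear_graph_zero: "(0, 0) \<in> G"
    and dominated_linear_graph_add: "(x, a) \<in> G \<Longrightarrow> (y, b) \<in> G \<Longrightarrow> (x + y, a + b) \<in> G"
    and dominated_linear_graph_scale: "(x, a) \<in> G \<Longrightarrow> (t *\<^sub>R x, t * a) \<in> G"
    and dominated_linear_graph_le: "(x, a) \<in> G \<Longrightarrow> a \<le> p x"
  using assms unfolding dominated_linear_graph_def by simp_all

lemma dominated_linear_graph_Union_chain:
  assumes "C \<in> chains {G. dominated_linear_graph p G}" "C \<noteq> {}"
  shows "dominated_linear_graph p (\<Union>C)"
proof -
  have mem: "\<And>G. G \<in> C \<Longrightarrow> dominated_linear_graph p G" using assms(1) chainsD2 by blast
  have common: "\<exists>K\<in>C. (x, a) \<in> K \<and> (y, b) \<in> K"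
    if xa: "(x, a) \<in> \<Union>C" and yb: "(y, b) \<in> \<Union>C" for x a y b
  proof -
    obtain G H where "G \<in> C" "(x, a) \<in> G" "H \<in> C" "(y, b) \<in> H" using xa yb by blast
    then show ?thesis using chainsD[OF assms(1), of G H] by blast
  qed
  show ?thesis unfolding dominated_linear_graph_def
  proof (intro conjI allI impI)
    show "(0, 0) \<in> \<Union>C" using assms(2) dominated_linear_graph_zero[OF mem] by blast
  next
    fix x a b assume "(x, a) \<in> \<Union>C" "(x, b) \<in> \<Union>C"
    then obtain K where "K \<in> C" "(x, a) \<in> K" "(x, b) \<in> K" using common by blast
    then show "a = b" using dominated_linear_graph_unique[OF mem] by blast
  next
    fix x a y b assume "(x, a) \<in> \<Union>C" "(y, b) \<in> \<Union>C"
    then obtain K where "K \<in> C" "(x, a) \<in> K" "(y, b) \<in> K" using common by blast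
    then show "(x + y, a + b) \<in> \<Union>C" using dominated_linear_graph_add[OF mem] by blast
  next
    fix x a t assume "(x, a) \<in> \<Union>C"
    then show "(t *\<^sub>R x, t * a) \<in> \<Union>C" using dominated_linear_graph_scale[OF mem] by blast
  next
    fix x a assume "(x, a) \<in> \<Union>C"
    then show "a \<le> p x" using dominated_linear_graph_le[OF mem] by blast
  qed
qed

context
  fixes p :: "'a::real_vector \<Rightarrow> real" and G :: "('a \<times> real) set" and x0 :: 'a
  assumes subadditive: "\<And>x y. p (x + y) \<le> p x + p y"
    and homogeneous: "\<And>x t. t > 0 \<Longrightarrow> p (t *\<^sub>R x) = t * p x"
    and graph: "dominated_linear_graph p G"
    and new: "x0 \<notin> fst ` G"
begin

private lemmas graph_add = dominated_linear_graph_add[OF graph]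
  and graph_scale = dominated_linear_graph_scale[OF graph]
  and graph_dominated = dominated_linear_graph_le[OF graph]
  and graph_zero = dominated_linear_graph_zero[OF graph]
  and graph_unique = dominated_linear_graph_unique[OF graph]

text \<open>The value at x0 must lie between a - p(d - x0) and p(e + x0) - b; such a value exists
  because (d + e, a + b) \<in> G and p is subadditive.\<close>
private lemma extension_value_exists:
  obtains c where "\<And>d a. (d, a) \<in> G \<Longrightarrow> a - p (d - x0) \<le> c"
    and "\<And>e b. (e, b) \<in> G \<Longrightarrow> c \<le> p (e + x0) - b"
proof -
  have key: "a - p (d - x0) \<le> p (e + x0) - b" if "(d, a) \<in> G" "(e, b) \<in> G" for d a e b
  proof -
    have "a + b \<le> p ((d - x0) + (e + x0))" using graph_dominated[OF graph_add[OF that]] by simp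
    also have "\<dots> \<le> p (d - x0) + p (e + x0)" by (rule subadditive)
    finally show ?thesis by simp
  qed
  define L where "L = {a - p (d - x0) | d a. (d, a) \<in> G}"
  have "L \<noteq> {}" using graph_zero unfolding L_def by blast
  moreover have "bdd_above L" unfolding L_def bdd_above_def using key[OF _ graph_zero] by auto
  ultimately show ?thesis
  proof (intro that[of "Sup L"])
    show "a - p (d - x0) \<le> Sup L" if "(d, a) \<in> G" for d a
      using \<open>bdd_above L\<close> that unfolding L_def by (intro cSup_upper) blast+
    show "Sup L \<le> p (e + x0) - b" if "(e, b) \<in> G" for e b
      using \<open>L \<noteq> {}\<close> key[OF _ that] unfolding L_def by (intro cSup_least) blast+
  qed
qed

private lemma decomposition_unique:
  assumes "(d, a) \<in> G" "(d', a') \<in> G" "d + t *\<^sub>R x0 = d' + t' *\<^sub>R x0"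
  shows "d = d' \<and> t = t'"
proof (cases "t = t'")
  case False
  have "(t - t') *\<^sub>R x0 = d' + (-1) *\<^sub>R d" using assms(3) by (simp add: algebra_simps)
  then have "(1 / (t - t')) *\<^sub>R ((t - t') *\<^sub>R x0) = (1 / (t - t')) *\<^sub>R (d' + (-1) *\<^sub>R d)" by simp
  then have "x0 = (1 / (t - t')) *\<^sub>R (d' + (-1) *\<^sub>R d)" using False by simp
  moreover have "(d' + (-1) *\<^sub>R d, a' + (-1) * a) \<in> G" using graph_add[OF assms(2) graph_scale[OF assms(1)]] .
  ultimately have "(x0, (1 / (t - t')) * (a' + (-1) * a)) \<in> G" using graph_scale by metis
  then show ?thesis using new by force
qed (use assms in simp)

private lemma extension_dominated:
  assumes lower: "\<And>d a. (d, a) \<in> G \<Longrightarrow> a - p (d - x0) \<le> c"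
    and upper: "\<And>e b. (e, b) \<in> G \<Longrightarrow> c \<le> p (e + x0) - b"
    and "(d, a) \<in> G"
  shows "a + t * c \<le> p (d + t *\<^sub>R x0)"
proof -
  consider "t = 0" | "t > 0" | "t < 0" by linarith
  then show ?thesis
  proof cases
    case 1 then show ?thesis using graph_dominated[OF assms(3)] by simp
  next
    case 2
    have "c \<le> p ((1/t) *\<^sub>R d + x0) - (1/t) * a" using upper[OF graph_scale[OF assms(3)]] .
    then have "t * c \<le> t * p ((1/t) *\<^sub>R d + x0) - a" using 2 by (simp add: field_simps)
    also have "t * p ((1/t) *\<^sub>R d + x0) = p (d + t *\<^sub>R x0)"
      using homogeneous[OF 2, of "(1/t) *\<^sub>R d + x0"] 2 by (simp add: scaleR_add_right)
    finally show ?thesis by simp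
  next
    case 3
    have "(-1/t) * a - p ((-1/t) *\<^sub>R d - x0) \<le> c" using lower[OF graph_scale[OF assms(3)]] .
    then have "a + t * c \<le> (- t) * p ((-1/t) *\<^sub>R d - x0)" using 3 by (simp add: field_simps)
    also have "(- t) * p ((-1/t) *\<^sub>R d - x0) = p (d + t *\<^sub>R x0)"
      using homogeneous[of "- t" "(-1/t) *\<^sub>R d - x0"] 3 by (simp add: scaleR_diff_right)
    finally show ?thesis .
  qed
qed

lemma dominated_linear_graph_extend:
  "\<exists>G'. dominated_linear_graph p G' \<and> G \<subset> G'"
proof -
  obtain c where lower: "\<And>d a. (d, a) \<in> G \<Longrightarrow> a - p (d - x0) \<le> c"
    and upper: "\<And>e b. (e, b) \<in> G \<Longrightarrow> c \<le> p (e + x0) - b"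
    using extension_value_exists by blast
  define G' where "G' = {(d + t *\<^sub>R x0, a + t * c) | d a t. (d, a) \<in> G}"
  have "dominated_linear_graph p G'" unfolding dominated_linear_graph_def
  proof (intro conjI allI impI)
    fix x a b assume "(x, a) \<in> G'" "(x, b) \<in> G'"
    then obtain d1 a1 t1 d2 a2 t2 where h: "(d1, a1) \<in> G" "(d2, a2) \<in> G"
      "x = d1 + t1 *\<^sub>R x0" "x = d2 + t2 *\<^sub>R x0" "a = a1 + t1 * c" "b = a2 + t2 * c"
      unfolding G'_def by blast
    then have "d1 = d2 \<and> t1 = t2" using decomposition_unique by metis
    then show "a = b" using h graph_unique by metis
  next
    show "(0, 0) \<in> G'" unfolding G'_def using graph_zero by force
  next
    fix x a y b assume "(x, a) \<in> G'" "(y, b) \<in> G'"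
    then obtain d1 a1 t1 d2 a2 t2 where h: "(d1, a1) \<in> G" "(d2, a2) \<in> G"
      "x = d1 + t1 *\<^sub>R x0" "y = d2 + t2 *\<^sub>R x0" "a = a1 + t1 * c" "b = a2 + t2 * c"
      unfolding G'_def by blast
    have "x + y = (d1 + d2) + (t1 + t2) *\<^sub>R x0" "a + b = (a1 + a2) + (t1 + t2) * c"
      using h by (simp_all add: algebra_simps)
    then show "(x + y, a + b) \<in> G'" unfolding G'_def using graph_add[OF h(1,2)] by blast
  next
    fix x a t assume "(x, a) \<in> G'"
    then obtain d a1 s where h: "(d, a1) \<in> G" "x = d + s *\<^sub>R x0" "a = a1 + s * c"
      unfolding G'_def by blast
    have "t *\<^sub>R x = t *\<^sub>R d + (t * s) *\<^sub>R x0" "t * a = t * a1 + (t * s) * c"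
      using h by (simp_all add: algebra_simps)
    then show "(t *\<^sub>R x, t * a) \<in> G'" unfolding G'_def using graph_scale[OF h(1)] by blast
  next
    fix x a assume "(x, a) \<in> G'"
    then show "a \<le> p x" unfolding G'_def using extension_dominated[OF lower upper] by blast
  qed
  moreover have "G \<subseteq> G'" unfolding G'_def by force
  moreover have "(x0, c) \<in> G' - G" unfolding G'_def using graph_zero new by force
  ultimately show ?thesis by blast
qed

end

lemma dominated_linear_graph_total_imp_linear:
  assumes G: "dominated_linear_graph p G" and total: "\<And>x. x \<in> fst ` G"
  obtains f where "linear f" "\<And>x. f x \<le> p x"
proof -
  define f where "f x = (THE a. (x, a) \<in> G)" for x
  have on_graph: "(x, f x) \<in> G" for x
  proof -
    obtain b where b: "(x, b) \<in> G" using total by force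
    then have "f x = b" unfolding f_def by (rule the_equality) (rule dominated_linear_graph_unique[OF G _ b])
    then show ?thesis using b by simp
  qed
  have graph_eq: "f x = a" if "(x, a) \<in> G" for x a
    using dominated_linear_graph_unique[OF G on_graph that] .
  have "linear f"
    by (rule linearI)
      (use graph_eq[OF dominated_linear_graph_add[OF G on_graph on_graph]]
        graph_eq[OF dominated_linear_graph_scale[OF G on_graph]] in auto)
  moreover have "f x \<le> p x" for x using dominated_linear_graph_le[OF G on_graph] .
  ultimately show thesis by (rule that)
qed

lemma hahn_banach_sublinear:
  fixes p :: "'a::real_vector \<Rightarrow> real"
  assumes subadditive: "\<And>x y. p (x + y) \<le> p x + p y"
    and homogeneous: "\<And>x t. t > 0 \<Longrightarrow> p (t *\<^sub>R x) \<le> t * p x"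
  obtains f where "linear f" "\<And>x. f x \<le> p x"
proof -
  have homogeneous_eq: "p (t *\<^sub>R x) = t * p x" if "t > 0" for x t
  proof -
    have "p x \<le> (1/t) * p (t *\<^sub>R x)"
      using homogeneous[of "1/t" "t *\<^sub>R x"] that by simp
    then show ?thesis using homogeneous[OF that, of x] that by (simp add: field_simps)
  qed
  have "\<exists>M\<in>{G. dominated_linear_graph p G}. \<forall>X\<in>{G. dominated_linear_graph p G}. M \<subseteq> X \<longrightarrow> X = M"
  proof (rule Zorn_Lemma2, intro ballI)
    fix C assume C: "C \<in> chains {G. dominated_linear_graph p G}"
    have "dominated_linear_graph p {(0, 0)}"
      using homogeneous_eq[of 2 0] unfolding dominated_linear_graph_def by simp
    then show "\<exists>U\<in>{G. dominated_linear_graph p G}. \<forall>X\<in>C. X \<subseteq> U"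
    proof (cases "C = {}")
      case False
      then show ?thesis using dominated_linear_graph_Union_chain[OF C] by blast
    qed blast
  qed
  then obtain G where G: "dominated_linear_graph p G"
    and maximal: "\<And>X. dominated_linear_graph p X \<Longrightarrow> G \<subseteq> X \<Longrightarrow> X = G" by blast
  have total: "x \<in> fst ` G" for x
    using dominated_linear_graph_extend[OF subadditive homogeneous_eq G, of x] maximal by blast
  show thesis by (rule dominated_linear_graph_total_imp_linear[OF G total]) (rule that)
qed

text \<open>If C is convex and norm c \<ge> \<delta> on C, this gauge is a sublinear functional below the norm
  that is \<le> -\<delta> on -C; Hahn-Banach then yields a separating functional of norm at most 1.\<close>
definition separation_gauge :: "'a::real_normed_vector set \<Rightarrow> real \<Rightarrow> 'a \<Rightarrow> real" where
  "separation_gauge C \<delta> x = Inf {norm (x + t *\<^sub>R c) - t * \<delta> | t c. 0 \<le> t \<and> c \<in> C}"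

context
  fixes C :: "'a::real_normed_vector set" and \<delta> :: real
  assumes convex: "convex C" and nonempty: "C \<noteq> {}" and far: "\<And>c. c \<in> C \<Longrightarrow> \<delta> \<le> norm c"
begin

private abbreviation "\<gamma> \<equiv> separation_gauge C \<delta>"

private lemma separation_gauge_le:
  assumes "0 \<le> t" "c \<in> C"
  shows "\<gamma> x \<le> norm (x + t *\<^sub>R c) - t * \<delta>"
proof -
  have "- norm x \<le> norm (y + s *\<^sub>R e) - s * \<delta>" if "0 \<le> s" "e \<in> C" "y = x" for y s e
  proof -
    have "s * \<delta> \<le> norm (s *\<^sub>R e)" using far[OF \<open>e \<in> C\<close>] \<open>0 \<le> s\<close> by (simp add: mult_left_mono)
    also have "\<dots> \<le> norm (x + s *\<^sub>R e) + norm x" using norm_triangle_ineq4[of "x + s *\<^sub>R e" x] by simp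
    finally show ?thesis using that by simp
  qed
  then have "bdd_below {norm (x + t *\<^sub>R c) - t * \<delta> | t c. 0 \<le> t \<and> c \<in> C}"
    by (intro bdd_belowI[of _ "- norm x"]) blast
  then show ?thesis unfolding separation_gauge_def using assms by (intro cInf_lower) blast+
qed

private lemma separation_gauge_ge:
  assumes "\<And>t c. 0 \<le> t \<Longrightarrow> c \<in> C \<Longrightarrow> v \<le> norm (x + t *\<^sub>R c) - t * \<delta>"
  shows "v \<le> \<gamma> x"
  unfolding separation_gauge_def using nonempty assms by (intro cInf_greatest) blast+

private lemma separation_gauge_le_norm: "\<gamma> x \<le> norm x"
  using separation_gauge_le[of 0] nonempty by fastforce

private lemma separation_gauge_uminus: "c \<in> C \<Longrightarrow> \<gamma> (- c) \<le> - \<delta>"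
  using separation_gauge_le[of 1 c "- c"] by simp

private lemma separation_gauge_subadditive: "\<gamma> (x + y) \<le> \<gamma> x + \<gamma> y"
proof -
  have split: "\<gamma> (x + y) \<le> (norm (x + t1 *\<^sub>R c1) - t1 * \<delta>) + (norm (y + t2 *\<^sub>R c2) - t2 * \<delta>)"
    if 1: "0 \<le> t1" "c1 \<in> C" and 2: "0 \<le> t2" "c2 \<in> C" for t1 t2 c1 c2
  proof (cases "t1 + t2 = 0")
    case True
    then have "t1 = 0" "t2 = 0" using 1 2 by auto
    then show ?thesis using separation_gauge_le_norm[of "x + y"] norm_triangle_ineq[of x y] by simp
  next
    case False
    then have pos: "t1 + t2 > 0" using 1 2 by linarith
    define c where "c = (t1 / (t1 + t2)) *\<^sub>R c1 + (t2 / (t1 + t2)) *\<^sub>R c2"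
    have "c \<in> C" unfolding c_def
      using 1 2 pos by (intro convexD[OF convex]) (auto simp: add_divide_distrib[symmetric])
    have "(t1 + t2) *\<^sub>R c = t1 *\<^sub>R c1 + t2 *\<^sub>R c2" unfolding c_def using pos by (simp add: scaleR_add_right)
    then have sum_eq: "(x + y) + (t1 + t2) *\<^sub>R c = (x + t1 *\<^sub>R c1) + (y + t2 *\<^sub>R c2)"
      by (simp add: algebra_simps)
    have "\<gamma> (x + y) \<le> norm ((x + y) + (t1 + t2) *\<^sub>R c) - (t1 + t2) * \<delta>"
      by (rule separation_gauge_le) (use pos \<open>c \<in> C\<close> in auto)
    also have "\<dots> = norm ((x + t1 *\<^sub>R c1) + (y + t2 *\<^sub>R c2)) - (t1 + t2) * \<delta>"
      by (simp only: sum_eq)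
    also have "\<dots> \<le> norm (x + t1 *\<^sub>R c1) + norm (y + t2 *\<^sub>R c2) - (t1 + t2) * \<delta>"
      using norm_triangle_ineq by simp
    finally show ?thesis by (simp add: algebra_simps)
  qed
  have "\<gamma> (x + y) - (norm (y + t2 *\<^sub>R c2) - t2 * \<delta>) \<le> \<gamma> x"
    if "0 \<le> t2" "c2 \<in> C" for t2 c2
    using split[OF _ _ that] by (intro separation_gauge_ge) (simp add: algebra_simps)
  then have "\<gamma> (x + y) - \<gamma> x \<le> \<gamma> y"
    by (intro separation_gauge_ge) (simp add: algebra_simps)
  then show ?thesis by simp
qed

private lemma separation_gauge_homogeneous:
  assumes "t > 0"
  shows "\<gamma> (t *\<^sub>R x) \<le> t * \<gamma> x"
proof -
  have "\<gamma> (t *\<^sub>R x) / t \<le> norm (x + s *\<^sub>R c) - s * \<delta>" if "0 \<le> s" "c \<in> C" for s c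
  proof -
    have "\<gamma> (t *\<^sub>R x) \<le> norm (t *\<^sub>R x + (t * s) *\<^sub>R c) - (t * s) * \<delta>"
      using separation_gauge_le that assms by simp
    also have "t *\<^sub>R x + (t * s) *\<^sub>R c = t *\<^sub>R (x + s *\<^sub>R c)" by (simp add: scaleR_add_right)
    also have "norm (t *\<^sub>R (x + s *\<^sub>R c)) = t * norm (x + s *\<^sub>R c)"
      using assms by (metis norm_scaleR abs_of_pos)
    also have "t * norm (x + s *\<^sub>R c) - (t * s) * \<delta> = t * (norm (x + s *\<^sub>R c) - s * \<delta>)"
      by (simp add: algebra_simps)
    finally show ?thesis using assms by (simp add: field_simps)
  qed
  then have "\<gamma> (t *\<^sub>R x) / t \<le> \<gamma> x" by (rule separation_gauge_ge)
  then show ?thesis using assms by (simp add: field_simps)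
qed

lemma separating_functional:
  obtains f :: "'a \<Rightarrow>\<^sub>L real" where "norm f \<le> 1" "\<And>c. c \<in> C \<Longrightarrow> \<delta> \<le> f c"
proof -
  obtain f where f: "linear f" "\<And>x. f x \<le> \<gamma> x"
    using hahn_banach_sublinear separation_gauge_subadditive separation_gauge_homogeneous by blast
  have f_le: "\<bar>f x\<bar> \<le> norm x" for x
    using f(2)[of x] f(2)[of "- x"] separation_gauge_le_norm[of x] separation_gauge_le_norm[of "- x"]
      linear_neg[OF f(1)] by (simp add: abs_le_iff)
  have "bounded_linear f"
    using f(1) f_le by (intro bounded_linear_intro[where K = 1]) (auto simp: linear_add linear_scale)
  then have apply_eq: "blinfun_apply (Blinfun f) = f" by (rule bounded_linear_Blinfun_apply)
  show thesis
  proof (rule that[of "Blinfun f"])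
    show "norm (Blinfun f) \<le> 1" by (rule norm_blinfun_bound) (use f_le apply_eq in auto)
    show "\<delta> \<le> Blinfun f c" if "c \<in> C" for c
      using f(2)[of "- c"] separation_gauge_uminus[OF that] linear_neg[OF f(1)] apply_eq by simp
  qed
qed

end

lemma unit_blinfun_le_norm:
  fixes f :: "'a::real_normed_vector \<Rightarrow>\<^sub>L real"
  assumes "norm f \<le> 1"
  shows "f x \<le> norm x"
proof -
  have "f x \<le> norm f * norm x" using norm_blinfun[of f x] by simp
  also have "\<dots> \<le> norm x" using assms by (simp add: mult_left_le_one_le)
  finally show ?thesis .
qed

lemma norming_functional:
  fixes x :: "'a::real_normed_vector"
  obtains f :: "'a \<Rightarrow>\<^sub>L real" where "norm f \<le> 1" "f x = norm x"
proof (cases "x = 0")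
  case False
  obtain f :: "'a \<Rightarrow>\<^sub>L real" where "norm f \<le> 1" "norm x \<le> f x"
    using separating_functional[of "{x}" "norm x"] by auto
  then show thesis using unit_blinfun_le_norm[of f x] that by force
qed (use that[of 0] in simp)

section \<open>Weakly null sequences\<close>

lemma uniform_boundedness_functionals:
  fixes x :: "'i \<Rightarrow> 'a::banach"
  assumes pointwise: "\<And>f::'a \<Rightarrow>\<^sub>L real. bounded (range (\<lambda>i. f (x i)))"
  shows "bounded (range x)"
proof -
  define T where "T n = {f::'a \<Rightarrow>\<^sub>L real. \<forall>i. \<bar>f (x i)\<bar> \<le> real n}" for n
  have "closed (T n)" for n
  proof -
    have "closed {f::'a \<Rightarrow>\<^sub>L real. \<bar>f (x i)\<bar> \<le> real n}" for i
      by (intro closed_Collect_le continuous_intros linear_continuous_on blinfun.bounded_linear_left)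
    then show ?thesis unfolding T_def by (simp add: Collect_all_eq closed_INT)
  qed
  moreover have "(\<Union>n. T n) = UNIV"
  proof -
    have "f \<in> T (nat \<lceil>B\<rceil>)" if "\<And>i. \<bar>f (x i)\<bar> \<le> B" for f :: "'a \<Rightarrow>\<^sub>L real" and B
      unfolding T_def using that real_nat_ceiling_ge[of B] by (blast intro: order_trans)
    then show ?thesis using pointwise unfolding bounded_iff by fastforce
  qed
  ultimately have "\<exists>n. interior (T n) \<noteq> {}"
    using Baire_category_alt[of euclidean "range T"]
    by (auto simp: completely_metrizable_space_euclidean euclidean_interior_of)
  then obtain n g r where "r > 0" "ball g r \<subseteq> T n"
    by (meson open_contains_ball open_interior interior_subset subset_trans ex_in_conv)
  text \<open>Testing the ball around g on a norming functional h for x i bounds norm (x i).\<close>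
  have bound: "norm (x i) \<le> 4 * real n / r" for i
  proof -
    obtain h :: "'a \<Rightarrow>\<^sub>L real" where h: "norm h \<le> 1" "h (x i) = norm (x i)"
      using norming_functional by blast
    have "g + (r/2) *\<^sub>R h \<in> T n" "g \<in> T n" using \<open>r > 0\<close> \<open>ball g r \<subseteq> T n\<close> h(1) by (auto simp: dist_norm)
    then have "\<bar>g (x i) + (r/2) * h (x i)\<bar> \<le> real n" "\<bar>g (x i)\<bar> \<le> real n"
      unfolding T_def by (auto simp: blinfun.add_left blinfun.scaleR_left)
    then have "(r/2) * norm (x i) \<le> 2 * real n" unfolding h(2) by linarith
    then show ?thesis using \<open>r > 0\<close> by (simp add: field_simps)
  qed
  then show ?thesis by (intro boundedI[of _ "4 * real n / r"]) auto
qed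

lemma weakly_convergent_imp_bounded:
  fixes x :: "nat \<Rightarrow> 'a::banach"
  assumes "weakly_converges x y"
  shows "bounded (range x)"
proof (rule uniform_boundedness_functionals)
  fix f :: "'a \<Rightarrow>\<^sub>L real"
  have "(\<lambda>k. f (x k)) \<longlonglongrightarrow> f y" using assms unfolding weakly_converges_def by blast
  then show "bounded (range (\<lambda>k. f (x k)))" by (rule convergent_imp_bounded)
qed

text \<open>Mazur's lemma: otherwise a functional separating the convex hull from the open \<eta>-ball
  stays \<ge> \<eta> on infinitely many x i.\<close>
lemma weakly_null_convex_hull_small:
  fixes x :: "nat \<Rightarrow> 'a::real_normed_vector"
  assumes "weakly_converges x 0" "infinite D" "\<eta> > 0"
  shows "\<exists>c \<in> convex hull (x ` D). norm c < \<eta>"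
proof (rule ccontr)
  assume "\<not> ?thesis"
  then have far: "\<eta> \<le> norm c" if "c \<in> convex hull (x ` D)" for c
    using that by (meson not_le)
  have "convex hull (x ` D) \<noteq> {}" using \<open>infinite D\<close> by auto
  then obtain f :: "'a \<Rightarrow>\<^sub>L real" where f: "\<And>c. c \<in> convex hull (x ` D) \<Longrightarrow> \<eta> \<le> f c"
    using separating_functional[OF convex_convex_hull _ far] by blast
  have "(\<lambda>k. f (x k)) \<longlonglongrightarrow> 0" using assms(1) unfolding weakly_converges_def by force
  then obtain N where "\<And>k. k \<ge> N \<Longrightarrow> \<bar>f (x k)\<bar> < \<eta>"
    using \<open>\<eta> > 0\<close> by (auto simp: lim_sequentially dist_real_def)
  moreover obtain k where "k \<in> D" "k \<ge> N" using \<open>infinite D\<close> by (meson infinite_nat_iff_unbounded_le)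
  ultimately show False using f[of "x k"] hull_subset[of "x ` D" convex] by force
qed

lemma weakly_null_functionals_small_somewhere:
  fixes x :: "nat \<Rightarrow> 'a::real_normed_vector"
  assumes "weakly_converges x 0" "infinite D" "\<eta> > 0"
  obtains N where "\<And>f::'a \<Rightarrow>\<^sub>L real. norm f \<le> 1 \<Longrightarrow> \<exists>i\<in>D. i \<le> N \<and> blinfun_apply f (x i) < \<eta>"
proof -
  obtain c where c: "c \<in> convex hull (x ` D)" "norm c < \<eta>"
    using weakly_null_convex_hull_small[OF assms] by blast
  then obtain S u where "finite S" "S \<subseteq> x ` D" "\<forall>v\<in>S. 0 \<le> u v" "sum u S = 1" "(\<Sum>v\<in>S. u v *\<^sub>R v) = c"
    unfolding convex_hull_explicit by blast
  then have S: "finite S" "S \<subseteq> x ` D" "c \<in> convex hull S" by (auto simp: convex_hull_finite)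
  obtain N where N: "S \<subseteq> x ` (D \<inter> {..N})"
  proof -
    obtain I where I: "I \<subseteq> D" "finite I" "S = x ` I" using S by (meson finite_subset_image)
    then have "I \<subseteq> D \<inter> {..Max (insert 0 I)}" by auto
    then show thesis using that[of "Max (insert 0 I)"] I(3) by blast
  qed
  show thesis
  proof (rule that[of N], rule ccontr)
    fix f :: "'a \<Rightarrow>\<^sub>L real" assume "norm f \<le> 1" "\<not> (\<exists>i\<in>D. i \<le> N \<and> f (x i) < \<eta>)"
    then have "S \<subseteq> f -` {\<eta>..}" using N by force
    moreover have "convex (f -` {\<eta>..})"
      by (intro convex_linear_vimage bounded_linear.linear blinfun.bounded_linear_right convex_real_interval)
    ultimately have "\<eta> \<le> f c" using S(3) hull_minimal by blast
    then show False using unit_blinfun_le_norm[OF \<open>norm f \<le> 1\<close>, of c] c(2) by simp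
  qed
qed

lemma wu_gt_imp_large_values:
  fixes y :: "nat \<Rightarrow> 'a::real_normed_vector"
  assumes "ereal b < wu y 0" "b > 0"
  shows "\<exists>f::'a \<Rightarrow>\<^sub>L real. norm f \<le> 1 \<and>
    (\<exists>K. finite K \<and> card K = n \<and> (\<forall>k\<in>K. b < blinfun_apply f (y k)))"
proof -
  define E where "E f = {k. b < \<bar>blinfun_apply f (y k)\<bar>}" for f :: "'a \<Rightarrow>\<^sub>L real"
  have "\<not> (\<forall>f::'a \<Rightarrow>\<^sub>L real. norm f \<le> 1 \<longrightarrow> finite (E f) \<and> card (E f) \<le> 2 * n)"
  proof
    assume "\<forall>f::'a \<Rightarrow>\<^sub>L real. norm f \<le> 1 \<longrightarrow> finite (E f) \<and> card (E f) \<le> 2 * n"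
    then have "wu y 0 \<le> ereal b"
      unfolding wu_def E_def using \<open>b > 0\<close> by (intro Inf_lower) auto
    then show False using assms(1) by simp
  qed
  then obtain f :: "'a \<Rightarrow>\<^sub>L real" where "norm f \<le> 1" "\<not> (finite (E f) \<and> card (E f) \<le> 2 * n)"
    by blast
  then obtain E' where E': "E' \<subseteq> E f" "finite E'" "card E' = Suc (2 * n)"
    by (metis infinite_arbitrarily_large not_less_eq_eq obtain_subset_with_card_n)
  define P N where "P = {k\<in>E'. b < f (y k)}" and "N = {k\<in>E'. b < (- f) (y k)}"
  have "E' \<subseteq> P \<union> N"
  proof
    fix k assume "k \<in> E'"
    then have "b < \<bar>f (y k)\<bar>" using E'(1) unfolding E_def by blast
    then show "k \<in> P \<union> N" using \<open>k \<in> E'\<close> unfolding P_def N_def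
      by (cases "0 \<le> f (y k)") (auto simp: blinfun.minus_left)
  qed
  then have "Suc (2 * n) \<le> card P + card N"
    using E'(2,3) card_mono[of "P \<union> N" E'] card_Un_le[of P N] unfolding P_def N_def by simp
  then have "n \<le> card P \<or> n \<le> card N" by linarith
  then obtain g :: "'a \<Rightarrow>\<^sub>L real" and L where "norm g \<le> 1" "n \<le> card L" "\<forall>k\<in>L. b < g (y k)"
    using \<open>norm f \<le> 1\<close> unfolding P_def N_def by (metis (mono_tags, lifting) mem_Collect_eq norm_minus_cancel)
  then obtain K where "K \<subseteq> L" "card K = n" "finite K" using obtain_subset_with_card_n by metis
  then show ?thesis using \<open>norm g \<le> 1\<close> \<open>\<forall>k\<in>L. b < g (y k)\<close> by blast
qed

lemma wu_tilde_gt_imp_large_values: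
  fixes x :: "nat \<Rightarrow> 'a::real_normed_vector"
  assumes "ereal b < wu_tilde x 0" "b > 0" "infinite M"
  shows "\<exists>f::'a \<Rightarrow>\<^sub>L real. norm f \<le> 1 \<and>
    (\<exists>K\<subseteq>M. finite K \<and> card K = n \<and> (\<forall>i\<in>K. b \<le> blinfun_apply f (x i)))"
proof -
  define r where "r = enumerate M"
  have r: "strict_mono r" "range r \<subseteq> M"
    using strict_mono_enumerate enumerate_in_set \<open>infinite M\<close> unfolding r_def by auto
  have "wu_tilde x 0 \<le> wu (x \<circ> r) 0" unfolding wu_tilde_def using r(1) by (intro Inf_lower) blast
  then have "ereal b < wu (x \<circ> r) 0" using assms(1) by simp
  then obtain f :: "'a \<Rightarrow>\<^sub>L real" and K where f: "norm f \<le> 1" "finite K" "card K = n"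
    "\<forall>k\<in>K. b < f (x (r k))"
    using wu_gt_imp_large_values[of b "x \<circ> r" n] assms(2) by auto
  have "r ` K \<subseteq> M" "finite (r ` K)" "card (r ` K) = n" "\<forall>i\<in>r ` K. b \<le> f (x i)"
    using r f card_image[OF strict_mono_imp_inj_on[OF r(1)]] by auto
  then show ?thesis using f(1) by blast
qed

section \<open>A diagonal construction of the subsequence\<close>

lemma infinite_greater:
  assumes "infinite (M::nat set)"
  shows "infinite {y\<in>M. a < y}"
proof -
  have "{y\<in>M. a < y} = M - {..a}" by auto
  then show ?thesis using Diff_infinite_finite[OF finite_atMost assms, of a] by (simp only: not_False_eq_True)
qed

lemma nested_choice_sequence:
  fixes Q :: "nat \<Rightarrow> nat set \<Rightarrow> bool"
  assumes choice: "\<And>M. M \<subseteq> M0 \<Longrightarrow> infinite M \<Longrightarrow>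
      \<exists>a\<in>M. \<exists>M'\<subseteq>M. infinite M' \<and> (\<forall>y\<in>M'. a < y) \<and> Q a M'"
    and "infinite M0"
  shows "\<exists>a M. \<forall>n. a n \<in> M0 \<and> M n \<subseteq> M0 \<and> (\<forall>y\<in>M n. a n < y) \<and> Q (a n) (M n) \<and>
    a (Suc n) \<in> M n \<and> M (Suc n) \<subseteq> M n"
proof -
  define P where "P n s \<longleftrightarrow> fst s \<in> M0 \<and> snd s \<subseteq> M0 \<and> infinite (snd s) \<and>
      (\<forall>y\<in>snd s. fst s < y) \<and> Q (fst s) (snd s)" for n :: nat and s :: "nat \<times> nat set"
  have "\<exists>s. \<forall>n. P n (s n) \<and> fst (s (Suc n)) \<in> snd (s n) \<and> snd (s (Suc n)) \<subseteq> snd (s n)"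
  proof (rule dependent_nat_choice)
    obtain a M' where "a \<in> M0" "M' \<subseteq> M0" "infinite M'" "\<forall>y\<in>M'. a < y" "Q a M'"
      using choice[OF order_refl \<open>infinite M0\<close>] by blast
    then show "\<exists>s. P 0 s" unfolding P_def by (intro exI[of _ "(a, M')"]) simp
  next
    fix s n assume "P n s"
    then obtain a M' where "a \<in> snd s" "M' \<subseteq> snd s" "infinite M'" "\<forall>y\<in>M'. a < y" "Q a M'"
      using choice[of "snd s"] unfolding P_def by blast
    then show "\<exists>t. P (Suc n) t \<and> fst t \<in> snd s \<and> snd t \<subseteq> snd s"
      using \<open>P n s\<close> unfolding P_def by (intro exI[of _ "(a, M')"]) auto
  qed
  then obtain s where "\<And>n. P n (s n)" "\<And>n. fst (s (Suc n)) \<in> snd (s n)"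
    "\<And>n. snd (s (Suc n)) \<subseteq> snd (s n)" by blast
  then show ?thesis unfolding P_def by (intro exI[of _ "\<lambda>n. fst (s n)"] exI[of _ "\<lambda>n. snd (s n)"]) simp
qed

lemma diagonal_infinite_subset:
  fixes Q :: "nat \<Rightarrow> nat set \<Rightarrow> bool"
  assumes hereditary: "\<And>a M M'. Q a M \<Longrightarrow> M' \<subseteq> M \<Longrightarrow> Q a M'"
    and choice: "\<And>M. M \<subseteq> M0 \<Longrightarrow> infinite M \<Longrightarrow>
      \<exists>a\<in>M. \<exists>M'\<subseteq>M. infinite M' \<and> (\<forall>y\<in>M'. a < y) \<and> Q a M'"
    and "infinite M0"
  shows "\<exists>D\<subseteq>M0. infinite D \<and> (\<forall>a\<in>D. Q a {y\<in>D. a < y})"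
proof -
  obtain a M where s: "\<forall>n. a n \<in> M0 \<and> M n \<subseteq> M0 \<and> (\<forall>y\<in>M n. a n < y) \<and> Q (a n) (M n) \<and>
    a (Suc n) \<in> M n \<and> M (Suc n) \<subseteq> M n"
    using nested_choice_sequence[OF choice \<open>infinite M0\<close>] by blast
  have M_antimono: "M n \<subseteq> M m" if "m \<le> n" for m n
    using that by (induction n rule: dec_induct) (use s in auto)
  have later_in: "a n \<in> M m" if "m < n" for m n
  proof -
    obtain k where "n = Suc k" "m \<le> k" using \<open>m < n\<close> by (cases n) auto
    then show ?thesis using s M_antimono[of m k] by auto
  qed
  have "strict_mono a" by (rule strict_monoI_Suc) (use s in blast)
  have "range a \<subseteq> M0" using s by auto
  moreover have "infinite (range a)"
    using \<open>strict_mono a\<close> strict_mono_imp_inj_on range_inj_infinite by blast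
  moreover have "\<forall>d\<in>range a. Q d {y \<in> range a. d < y}"
  proof
    fix d assume "d \<in> range a"
    then obtain n where n: "d = a n" by blast
    have "{y \<in> range a. d < y} \<subseteq> M n"
      using later_in strict_mono_less[OF \<open>strict_mono a\<close>] n by auto
    then show "Q d {y \<in> range a. d < y}" using hereditary s n by blast
  qed
  ultimately show ?thesis by blast
qed

definition rank :: "nat set \<Rightarrow> nat \<Rightarrow> nat" where
  "rank A m = card {y\<in>A. y < m}"

lemma rank_insert_ge: "m \<le> a \<Longrightarrow> rank (insert a A) m = rank A m"
  unfolding rank_def by (metis (no_types, lifting) insert_iff mem_Collect_eq not_less)

lemma rank_insert_top:
  assumes "\<forall>z\<in>A. z < a"
  shows "rank (insert a A) a = card A"
proof -
  have "{y \<in> insert a A. y < a} = A" using assms by auto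
  then show ?thesis unfolding rank_def by simp
qed

lemma rank_le_card: "finite A \<Longrightarrow> rank A m \<le> card A"
  unfolding rank_def by (intro card_mono) auto

lemma rank_strict_mono_image:
  assumes "strict_mono r" "j \<le> m"
  shows "rank (r ` {..m}) (r j) = j"
proof -
  have "{y \<in> r ` {..m}. y < r j} = r ` {..<j}"
    using assms by (auto simp: strict_mono_less)
  then show ?thesis
    unfolding rank_def using card_image[OF strict_mono_imp_inj_on[OF assms(1)]] by simp
qed

locale spreading_construction =
  fixes x :: "nat \<Rightarrow> 'a::real_normed_vector" and b \<eta> :: real
  assumes weakly_null: "weakly_converges x 0" and \<eta>_pos: "\<eta> > 0"
    and large_values: "\<And>M n. infinite M \<Longrightarrow> \<exists>f::'a \<Rightarrow>\<^sub>L real. norm f \<le> 1 \<and>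
      (\<exists>K\<subseteq>M. finite K \<and> card K = n \<and> (\<forall>i\<in>K. b \<le> blinfun_apply f (x i)))"
begin

definition realizes :: "('a \<Rightarrow>\<^sub>L real) \<Rightarrow> nat set \<Rightarrow> nat set \<Rightarrow> bool" where
  "realizes f B S \<longleftrightarrow> norm f \<le> 1 \<and> (\<forall>i\<in>B. b \<le> f (x i)) \<and> (\<forall>i\<in>S. f (x i) \<le> \<eta>)"

definition witnessed :: "nat \<Rightarrow> nat set \<Rightarrow> nat set \<Rightarrow> nat set \<Rightarrow> bool" where
  "witnessed n B S M \<longleftrightarrow> (\<exists>f K. K \<subseteq> M \<and> finite K \<and> card K = n \<and> realizes f (B \<union> K) S)"

definition extendable :: "nat \<Rightarrow> nat set \<Rightarrow> nat set \<Rightarrow> nat set \<Rightarrow> bool" where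
  "extendable n B S M \<longleftrightarrow> (\<forall>M'\<subseteq>M. infinite M' \<longrightarrow> witnessed n B S M')"

lemma witnessed_mono: "witnessed n B S M \<Longrightarrow> M \<subseteq> M' \<Longrightarrow> witnessed n B S M'"
  unfolding witnessed_def by blast

lemma extendable_subset: "extendable n B S M \<Longrightarrow> M' \<subseteq> M \<Longrightarrow> extendable n B S M'"
  unfolding extendable_def by blast

lemma extendable_le:
  assumes "extendable n B S M" "m \<le> n"
  shows "extendable m B S M"
  unfolding extendable_def
proof (intro allI impI)
  fix M' assume "M' \<subseteq> M" "infinite M'"
  then obtain f K where "K \<subseteq> M'" "finite K" "card K = n" "realizes f (B \<union> K) S"
    using assms(1) unfolding extendable_def witnessed_def by blast
  moreover obtain K' where "K' \<subseteq> K" "card K' = m" "finite K'"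
    using obtain_subset_with_card_n[of m K] \<open>card K = n\<close> \<open>m \<le> n\<close> by metis
  ultimately show "witnessed m B S M'"
    unfolding witnessed_def realizes_def by (intro exI[of _ f] exI[of _ K']) blast
qed

lemma extendable_empty: "extendable n {} {} M"
  unfolding extendable_def
proof (intro allI impI)
  fix M' assume "M' \<subseteq> M" "infinite M'"
  then obtain f :: "'a \<Rightarrow>\<^sub>L real" and K where "norm f \<le> 1" "K \<subseteq> M'" "finite K" "card K = n" "\<forall>i\<in>K. b \<le> f (x i)"
    using large_values by blast
  then show "witnessed n {} {} M'" unfolding witnessed_def realizes_def by auto
qed

lemma not_extendable_diagonal:
  assumes "infinite M"
    and fails: "\<And>a M'. a \<in> M \<Longrightarrow> M' \<subseteq> M \<Longrightarrow> infinite M' \<Longrightarrow> \<forall>y\<in>M'. a < y \<Longrightarrow>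
      \<not> extendable n (B' a) (S' a) M'"
  shows "\<exists>D\<subseteq>M. infinite D \<and> (\<forall>a\<in>D. \<not> witnessed n (B' a) (S' a) {y\<in>D. a < y})"
proof (rule diagonal_infinite_subset[of "\<lambda>a M. \<not> witnessed n (B' a) (S' a) M" M])
  show "\<not> witnessed n (B' a) (S' a) M'" if "\<not> witnessed n (B' a) (S' a) M1" "M' \<subseteq> M1" for a M1 M'
    using that witnessed_mono by blast
  show "\<exists>a\<in>M1. \<exists>M'\<subseteq>M1. infinite M' \<and> (\<forall>y\<in>M'. a < y) \<and> \<not> witnessed n (B' a) (S' a) M'"
    if "M1 \<subseteq> M" "infinite M1" for M1
  proof -
    obtain a where "a \<in> M1" using \<open>infinite M1\<close> infinite_imp_nonempty by blast
    have "\<not> extendable n (B' a) (S' a) {y\<in>M1. a < y}"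
      by (rule fails) (use \<open>a \<in> M1\<close> \<open>M1 \<subseteq> M\<close> infinite_greater[OF \<open>infinite M1\<close>] in auto)
    then obtain M' where "M' \<subseteq> {y\<in>M1. a < y}" "infinite M'" "\<not> witnessed n (B' a) (S' a) M'"
      unfolding extendable_def by blast
    then show ?thesis using \<open>a \<in> M1\<close> by blast
  qed
qed (rule assms(1))

text \<open>Along the diagonal set D, the functional witnessing (B, S) far out in D must be > \<eta> on
  an initial segment of D, which Mazur's lemma forbids.\<close>
lemma extendable_add_small:
  assumes "extendable n B S M" "infinite M"
  shows "\<exists>a\<in>M. \<exists>M'\<subseteq>M. infinite M' \<and> (\<forall>y\<in>M'. a < y) \<and> extendable n B (insert a S) M'"
proof (rule ccontr)
  assume "\<not> ?thesis"
  then have not_extendable: "\<not> extendable n B (insert a S) M'"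
    if "a \<in> M" "M' \<subseteq> M" "infinite M'" "\<forall>y\<in>M'. a < y" for a M'
    using that by blast
  obtain D where D: "D \<subseteq> M" "infinite D"
    and fails: "\<forall>a\<in>D. \<not> witnessed n B (insert a S) {y\<in>D. a < y}"
    using not_extendable_diagonal[of M n "\<lambda>_. B" "\<lambda>a. insert a S", OF \<open>infinite M\<close> not_extendable] by blast
  obtain N where N: "\<And>f::'a \<Rightarrow>\<^sub>L real. norm f \<le> 1 \<Longrightarrow> \<exists>i\<in>D. i \<le> N \<and> blinfun_apply f (x i) < \<eta>"
    using weakly_null_functionals_small_somewhere[OF weakly_null \<open>infinite D\<close> \<eta>_pos] by blast
  have "{y\<in>D. N < y} \<subseteq> M" "infinite {y\<in>D. N < y}" using D infinite_greater by auto
  then obtain f K where f: "K \<subseteq> {y\<in>D. N < y}" "finite K" "card K = n" "realizes f (B \<union> K) S"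
    using assms(1) unfolding extendable_def witnessed_def by blast
  then obtain i where "i \<in> D" "i \<le> N" "f (x i) < \<eta>" using N unfolding realizes_def by blast
  then have "witnessed n B (insert i S) {y\<in>D. i < y}"
    using f unfolding witnessed_def realizes_def by (intro exI[of _ f] exI[of _ K]) auto
  then show False using fails \<open>i \<in> D\<close> by blast
qed

lemma extendable_add_big:
  assumes "extendable (Suc n) B S M" "infinite M"
  shows "\<exists>a\<in>M. \<exists>M'\<subseteq>M. infinite M' \<and> (\<forall>y\<in>M'. a < y) \<and> extendable n (insert a B) S M'"
proof (rule ccontr)
  assume "\<not> ?thesis"
  then have not_extendable: "\<not> extendable n (insert a B) S M'"
    if "a \<in> M" "M' \<subseteq> M" "infinite M'" "\<forall>y\<in>M'. a < y" for a M'
    using that by blast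
  obtain D where D: "D \<subseteq> M" "infinite D"
    and fails: "\<forall>a\<in>D. \<not> witnessed n (insert a B) S {y\<in>D. a < y}"
    using not_extendable_diagonal[of M n "\<lambda>a. insert a B" "\<lambda>_. S", OF \<open>infinite M\<close> not_extendable] by blast
  have "witnessed (Suc n) B S D" using assms(1) D unfolding extendable_def by blast
  then obtain f K where f: "K \<subseteq> D" "finite K" "card K = Suc n" "realizes f (B \<union> K) S"
    unfolding witnessed_def by blast
  define a where "a = Min K"
  have "K \<noteq> {}" using f(3) by auto
  then have "a \<in> K" "K - {a} \<subseteq> {y\<in>D. a < y}"
    using f(1,2) unfolding a_def by (auto simp: order.not_eq_order_implies_strict)
  moreover have "insert a B \<union> (K - {a}) = B \<union> K" using \<open>a \<in> K\<close> by auto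
  ultimately have "witnessed n (insert a B) S {y\<in>D. a < y}"
    using f unfolding witnessed_def by (intro exI[of _ f] exI[of _ "K - {a}"]) auto
  then show False using fails \<open>a \<in> K\<close> f(1) by blast
qed

definition extends_at :: "nat \<Rightarrow> nat set \<Rightarrow> nat set \<Rightarrow> nat set \<Rightarrow> nat \<Rightarrow> bool" where
  "extends_at n B S D a \<longleftrightarrow>
     extendable n (insert a B) S {y\<in>D. a < y} \<and> extendable n B (insert a S) {y\<in>D. a < y}"

lemma extends_at_subset:
  assumes "extends_at n B S D a" "D' \<subseteq> D"
  shows "extends_at n B S D' a"
proof -
  have "{y\<in>D'. a < y} \<subseteq> {y\<in>D. a < y}" using assms(2) by auto
  then show ?thesis using assms(1) extendable_subset unfolding extends_at_def by blast
qed

lemma extendable_split: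
  assumes "extendable (Suc n) B S M" "infinite M"
  shows "\<exists>D\<subseteq>M. infinite D \<and> (\<forall>a\<in>D. extends_at n B S D a)"
proof -
  have "\<exists>D1\<subseteq>M. infinite D1 \<and> (\<forall>a\<in>D1. extendable n (insert a B) S {y\<in>D1. a < y})"
  proof (rule diagonal_infinite_subset)
    show "\<exists>a\<in>M'. \<exists>M''\<subseteq>M'. infinite M'' \<and> (\<forall>y\<in>M''. a < y) \<and> extendable n (insert a B) S M''"
      if "M' \<subseteq> M" "infinite M'" for M'
      using extendable_add_big[OF extendable_subset[OF assms(1) that(1)] that(2)] .
  qed (use extendable_subset assms(2) in auto)
  then obtain D1 where D1: "D1 \<subseteq> M" "infinite D1"
    and big: "\<forall>a\<in>D1. extendable n (insert a B) S {y\<in>D1. a < y}" by blast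
  have "extendable n B S D1" using extendable_le[OF extendable_subset[OF assms(1) D1(1)]] by simp
  have "\<exists>D2\<subseteq>D1. infinite D2 \<and> (\<forall>a\<in>D2. extendable n B (insert a S) {y\<in>D2. a < y})"
  proof (rule diagonal_infinite_subset)
    show "\<exists>a\<in>M'. \<exists>M''\<subseteq>M'. infinite M'' \<and> (\<forall>y\<in>M''. a < y) \<and> extendable n B (insert a S) M''"
      if "M' \<subseteq> D1" "infinite M'" for M'
      using extendable_add_small[OF extendable_subset[OF \<open>extendable n B S D1\<close> that(1)] that(2)] .
  qed (use extendable_subset D1(2) in auto)
  then obtain D2 where D2: "D2 \<subseteq> D1" "infinite D2"
    and small: "\<forall>a\<in>D2. extendable n B (insert a S) {y\<in>D2. a < y}" by blast
  have "extends_at n B S D2 a" if "a \<in> D2" for a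
  proof -
    have "{y\<in>D2. a < y} \<subseteq> {y\<in>D1. a < y}" using D2(1) by auto
    then have "extendable n (insert a B) S {y\<in>D2. a < y}"
      using big that D2(1) by (blast intro: extendable_subset)
    then show ?thesis using small that unfolding extends_at_def by blast
  qed
  then show ?thesis using D1(1) D2 by blast
qed

lemma extendable_split_finite:
  assumes "finite CS" "\<forall>(n, B, S)\<in>CS. extendable (Suc n) B S M" "infinite M"
  shows "\<exists>D\<subseteq>M. infinite D \<and> (\<forall>a\<in>D. \<forall>(n, B, S)\<in>CS. extends_at n B S D a)"
  using assms
proof (induction CS arbitrary: M rule: finite_induct)
  case (insert t CS)
  obtain n B S where t: "t = (n, B, S)" by (cases t)
  obtain D1 where D1: "D1 \<subseteq> M" "infinite D1" "\<forall>a\<in>D1. \<forall>(n, B, S)\<in>CS. extends_at n B S D1 a"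
    using insert.IH insert.prems by blast
  have "extendable (Suc n) B S M" using insert.prems(1) t by simp
  then have "extendable (Suc n) B S D1" using D1(1) by (rule extendable_subset)
  then obtain D2 where D2: "D2 \<subseteq> D1" "infinite D2" "\<forall>a\<in>D2. extends_at n B S D2 a"
    using extendable_split[OF _ D1(2)] by blast
  have "extends_at n' B' S' D2 a" if "a \<in> D2" "(n', B', S') \<in> CS" for a n' B' S'
  proof (rule extends_at_subset[OF _ D2(1)])
    show "extends_at n' B' S' D1 a" using D1(3) that D2(1) by fastforce
  qed
  then have "\<forall>a\<in>D2. \<forall>(n, B, S)\<in>insert t CS. extends_at n B S D2 a" using D2(3) t by auto
  then show ?case using D1(1) D2(1,2) by (intro exI[of _ D2]) auto
qed blast

text \<open>With U = G \<union> T: A holds the indices chosen so far and rank A (Min U) is the position of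
  Min U in A, so the bound on card U is the paper's admissibility #F \<le> min F; the pattern must
  keep room for the rank A (Min U) + 1 - card U indices still missing from a maximal admissible
  set starting at Min U.\<close>
definition invariant :: "nat set \<Rightarrow> nat set \<Rightarrow> bool" where
  "invariant A M \<longleftrightarrow> (\<forall>G T. G \<subseteq> A \<longrightarrow> T \<subseteq> A \<longrightarrow> G \<inter> T = {} \<longrightarrow> G \<union> T \<noteq> {} \<longrightarrow>
     card (G \<union> T) \<le> rank A (Min (G \<union> T)) + 1 \<longrightarrow>
     extendable (rank A (Min (G \<union> T)) + 1 - card (G \<union> T)) G T M)"

lemma invariant_empty: "invariant {} M"
  unfolding invariant_def by auto

lemma invariant_realizes:
  assumes "invariant A M" "infinite M" "G \<subseteq> A" "T \<subseteq> A" "G \<inter> T = {}" "G \<union> T \<noteq> {}"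
    "card (G \<union> T) \<le> rank A (Min (G \<union> T)) + 1"
  shows "\<exists>f. realizes f G T"
proof -
  have "extendable (rank A (Min (G \<union> T)) + 1 - card (G \<union> T)) G T M"
    using assms(1,3-7) unfolding invariant_def by blast
  then have "witnessed (rank A (Min (G \<union> T)) + 1 - card (G \<union> T)) G T M"
    using assms(2) unfolding extendable_def by blast
  then obtain f K where "realizes f (G \<union> K) T" unfolding witnessed_def by blast
  then show ?thesis unfolding realizes_def by blast
qed

text \<open>A new top index a of a pattern needs one more free slot in the pattern without a.\<close>
lemma invariant_parent:
  assumes inv: "invariant A M" and "finite A" and below: "\<forall>z\<in>A. z < a"
    and "G0 \<subseteq> A" "T0 \<subseteq> A" "G0 \<inter> T0 = {}"
    and admissible: "card (insert a (G0 \<union> T0)) \<le> rank (insert a A) (Min (insert a (G0 \<union> T0))) + 1"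
  defines "k \<equiv> rank (insert a A) (Min (insert a (G0 \<union> T0))) + 1 - card (insert a (G0 \<union> T0))"
  shows "k \<le> card A \<and> extendable (Suc k) G0 T0 M"
proof -
  have fin: "finite (G0 \<union> T0)" using assms(4,5) \<open>finite A\<close> finite_subset by blast
  have "a \<notin> G0 \<union> T0" using assms(4,5) below by blast
  then have card: "card (insert a (G0 \<union> T0)) = Suc (card (G0 \<union> T0))" using fin by simp
  show ?thesis
  proof (cases "G0 \<union> T0 = {}")
    case True
    then have "k = card A" using rank_insert_top[OF below] unfolding k_def by simp
    then show ?thesis using True extendable_empty by simp
  next
    case False
    define m where "m = Min (G0 \<union> T0)"
    have "m \<in> A" using Min_in[OF fin False] assms(4,5) unfolding m_def by blast
    then have "m < a" using below by blast
    then have min: "Min (insert a (G0 \<union> T0)) = m" using fin False unfolding m_def by simp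
    have rank: "rank (insert a A) m = rank A m" using \<open>m < a\<close> by (simp add: rank_insert_ge)
    have "card (G0 \<union> T0) \<le> rank A m" using admissible card min rank by simp
    then have "extendable (rank A m + 1 - card (G0 \<union> T0)) G0 T0 M"
      using inv assms(4-6) False unfolding invariant_def m_def by simp
    moreover have "rank A m + 1 - card (G0 \<union> T0) = Suc k"
      using \<open>card (G0 \<union> T0) \<le> rank A m\<close> card min rank unfolding k_def by simp
    moreover have "k \<le> card A"
      using rank_le_card[OF \<open>finite A\<close>, of m] card min rank unfolding k_def by simp
    ultimately show ?thesis by simp
  qed
qed

lemma extendable_split_subsets:
  assumes "finite A" "infinite M"
  shows "\<exists>D\<subseteq>M. infinite D \<and> (\<forall>a\<in>D. \<forall>k G0 T0. k \<le> card A \<longrightarrow> G0 \<subseteq> A \<longrightarrow> T0 \<subseteq> A \<longrightarrow>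
     extendable (Suc k) G0 T0 M \<longrightarrow> extends_at k G0 T0 D a)"
proof -
  define CS where "CS = {(k, G0, T0). k \<le> card A \<and> G0 \<subseteq> A \<and> T0 \<subseteq> A \<and> extendable (Suc k) G0 T0 M}"
  have "CS \<subseteq> {..card A} \<times> Pow A \<times> Pow A" unfolding CS_def by auto
  then have "finite CS" by (rule finite_subset) (use \<open>finite A\<close> in simp)
  moreover have "\<forall>(k, G0, T0)\<in>CS. extendable (Suc k) G0 T0 M" unfolding CS_def by auto
  ultimately have "\<exists>D\<subseteq>M. infinite D \<and> (\<forall>a\<in>D. \<forall>(k, G0, T0)\<in>CS. extends_at k G0 T0 D a)"
    using \<open>infinite M\<close> by (rule extendable_split_finite)
  then obtain D where "D \<subseteq> M" "infinite D" "\<forall>a\<in>D. \<forall>(k, G0, T0)\<in>CS. extends_at k G0 T0 D a"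
    by blast
  then show ?thesis unfolding CS_def by (intro exI[of _ D]) auto
qed

lemma invariant_insert_top:
  assumes inv: "invariant A M" and "finite A" and below: "\<forall>z\<in>A. z < a"
    and "{y\<in>D. a < y} \<subseteq> M"
    and split: "\<forall>k G0 T0. k \<le> card A \<longrightarrow> G0 \<subseteq> A \<longrightarrow> T0 \<subseteq> A \<longrightarrow>
      extendable (Suc k) G0 T0 M \<longrightarrow> extends_at k G0 T0 D a"
  shows "invariant (insert a A) {y\<in>D. a < y}"
  unfolding invariant_def
proof (intro allI impI)
  fix G T assume G: "G \<subseteq> insert a A" and T: "T \<subseteq> insert a A" and disj: "G \<inter> T = {}"
    and ne: "G \<union> T \<noteq> {}" and adm: "card (G \<union> T) \<le> rank (insert a A) (Min (G \<union> T)) + 1"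
  show "extendable (rank (insert a A) (Min (G \<union> T)) + 1 - card (G \<union> T)) G T {y\<in>D. a < y}"
  proof (cases "a \<in> G \<union> T")
    case False
    then have "G \<subseteq> A" "T \<subseteq> A" using G T by auto
    then have "Min (G \<union> T) \<in> A" using Min_in[OF _ ne] \<open>finite A\<close> finite_subset by blast
    then have "rank (insert a A) (Min (G \<union> T)) = rank A (Min (G \<union> T))"
      using below by (simp add: rank_insert_ge less_imp_le)
    then show ?thesis
      using inv \<open>G \<subseteq> A\<close> \<open>T \<subseteq> A\<close> disj ne adm \<open>{y\<in>D. a < y} \<subseteq> M\<close> extendable_subset
      unfolding invariant_def by metis
  next
    case True
    define G0 T0 where "G0 = G - {a}" and "T0 = T - {a}"
    have U: "G \<union> T = insert a (G0 \<union> T0)" using True unfolding G0_def T0_def by blast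
    have sub: "G0 \<subseteq> A" "T0 \<subseteq> A" "G0 \<inter> T0 = {}" using G T disj unfolding G0_def T0_def by auto
    define k where "k = rank (insert a A) (Min (G \<union> T)) + 1 - card (G \<union> T)"
    have "k \<le> card A \<and> extendable (Suc k) G0 T0 M"
      using invariant_parent[OF inv \<open>finite A\<close> below sub] adm unfolding U k_def by blast
    then have "extends_at k G0 T0 D a" using split sub(1,2) by blast
    moreover have "G = insert a G0 \<and> T = T0 \<or> G = G0 \<and> T = insert a T0"
      using True disj unfolding G0_def T0_def by blast
    ultimately show ?thesis unfolding extends_at_def k_def by blast
  qed
qed

lemma invariant_insert:
  assumes "invariant A M" "finite A" "infinite M" and above: "\<forall>y\<in>M. \<forall>z\<in>A. z < y"
  shows "\<exists>a\<in>M. \<exists>M'\<subseteq>M. infinite M' \<and> (\<forall>y\<in>M'. a < y) \<and> invariant (insert a A) M'"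
proof -
  obtain D where D: "D \<subseteq> M" "infinite D"
    and split: "\<forall>a\<in>D. \<forall>k G0 T0. k \<le> card A \<longrightarrow> G0 \<subseteq> A \<longrightarrow> T0 \<subseteq> A \<longrightarrow>
      extendable (Suc k) G0 T0 M \<longrightarrow> extends_at k G0 T0 D a"
    using extendable_split_subsets[OF \<open>finite A\<close> \<open>infinite M\<close>] by blast
  obtain a where "a \<in> D" using \<open>infinite D\<close> infinite_imp_nonempty by blast
  then have "a \<in> M" using D(1) by blast
  have "{y\<in>D. a < y} \<subseteq> M" using D(1) by blast
  moreover have "invariant (insert a A) {y\<in>D. a < y}"
    using invariant_insert_top[OF assms(1,2) _ \<open>{y\<in>D. a < y} \<subseteq> M\<close>] split \<open>a \<in> D\<close> above \<open>a \<in> M\<close>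
    by blast
  moreover have "infinite {y\<in>D. a < y}" using infinite_greater[OF D(2)] .
  ultimately show ?thesis using \<open>a \<in> M\<close> by blast
qed
lemma invariant_sequence:
  "\<exists>(r :: nat \<Rightarrow> nat) M. strict_mono r \<and> (\<forall>n. infinite (M n)) \<and> (\<forall>n. invariant (r ` {..<n}) (M n))"
proof -
  define P where "P n s \<longleftrightarrow> finite (fst s) \<and> card (fst s) = n \<and> infinite (snd s) \<and>
    (\<forall>y\<in>snd s. \<forall>z\<in>fst s. z < y) \<and> invariant (fst s) (snd s)" for n :: nat and s :: "nat set \<times> nat set"
  define Q where "Q n s t \<longleftrightarrow> (\<exists>a\<in>snd s. fst t = insert a (fst s) \<and> snd t \<subseteq> snd s \<and> (\<forall>y\<in>snd t. a < y))"
    for n :: nat and s t :: "nat set \<times> nat set"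
  have "\<exists>s. \<forall>n. P n (s n) \<and> Q n (s n) (s (Suc n))"
  proof (rule dependent_nat_choice)
    show "\<exists>s. P 0 s" unfolding P_def using invariant_empty by (intro exI[of _ "({}, UNIV)"]) auto
  next
    fix s n assume "P n s"
    then have s: "finite (fst s)" "card (fst s) = n" "infinite (snd s)"
      "\<forall>y\<in>snd s. \<forall>z\<in>fst s. z < y" "invariant (fst s) (snd s)" unfolding P_def by auto
    obtain a M' where aM': "a \<in> snd s" "M' \<subseteq> snd s" "infinite M'" "\<forall>y\<in>M'. a < y"
      "invariant (insert a (fst s)) M'"
      using invariant_insert[OF s(5,1,3,4)] by blast
    have "a \<notin> fst s" using s(4) aM'(1) by blast
    then have "P (Suc n) (insert a (fst s), M')" unfolding P_def using s aM' by fastforce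
    moreover have "Q n s (insert a (fst s), M')" unfolding Q_def using aM' by auto
    ultimately show "\<exists>t. P (Suc n) t \<and> Q n s t" by blast
  qed
  then obtain s where P: "\<And>n. P n (s n)" and Q: "\<And>n. Q n (s n) (s (Suc n))" by blast
  obtain r where r: "\<And>n. r n \<in> snd (s n)" "\<And>n. fst (s (Suc n)) = insert (r n) (fst (s n))"
    "\<And>n. \<forall>y\<in>snd (s (Suc n)). r n < y"
    using Q unfolding Q_def by metis
  have A: "fst (s n) = r ` {..<n}" for n
  proof (induction n)
    case 0 then show ?case using P[of 0] card_0_eq unfolding P_def by auto
  next
    case (Suc n) then show ?case using r(2)[of n] by (simp add: lessThan_Suc)
  qed
  have "strict_mono r" by (rule strict_monoI_Suc) (use r(1,3) in blast)
  moreover have "infinite (snd (s n))" "invariant (r ` {..<n}) (snd (s n))" for n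
    using P[of n] A[of n] unfolding P_def by auto
  ultimately show ?thesis by (intro exI[of _ r] exI[of _ "\<lambda>n. snd (s n)"]) simp
qed

lemma exists_subsequence:
  "\<exists>r. strict_mono r \<and> (\<forall>F G. finite F \<and> F \<noteq> {} \<and> card F \<le> Min F + 1 \<and> G \<subseteq> F \<longrightarrow>
      (\<exists>f. realizes f (r ` G) (r ` (F - G))))"
proof -
  obtain r :: "nat \<Rightarrow> nat" and M :: "nat \<Rightarrow> nat set"
    where r: "strict_mono r" and M: "\<forall>n. infinite (M n)" "\<forall>n. invariant (r ` {..<n}) (M n)"
    using invariant_sequence by blast
  have "\<exists>f. realizes f (r ` G) (r ` (F - G))"
    if F: "finite F" "F \<noteq> {}" "card F \<le> Min F + 1" and "G \<subseteq> F" for F G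
  proof -
    define m where "m = Max F"
    have "F \<subseteq> {..m}" using F(1) unfolding m_def by auto
    have inj: "inj_on r X" for X using strict_mono_imp_inj_on[OF r] .
    have U: "r ` G \<union> r ` (F - G) = r ` F" using \<open>G \<subseteq> F\<close> by auto
    have min: "Min (r ` F) = r (Min F)"
      using mono_Min_commute[OF strict_mono_mono[OF r] F(1,2)] by simp
    have rank: "rank (r ` {..m}) (r (Min F)) = Min F"
      using rank_strict_mono_image[OF r] \<open>F \<subseteq> {..m}\<close> Min_in[OF F(1,2)] by blast
    have "invariant (r ` {..m}) (M (Suc m))" using M(2)[rule_format, of "Suc m"] by (simp add: lessThan_Suc_atMost)
    then show ?thesis
    proof (rule invariant_realizes)
      show "r ` G \<inter> r ` (F - G) = {}" using inj[of UNIV] by (auto simp: inj_on_def)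
      show "card (r ` G \<union> r ` (F - G)) \<le> rank (r ` {..m}) (Min (r ` G \<union> r ` (F - G))) + 1"
        unfolding U min rank card_image[OF inj] by (rule F(3))
    qed (use M(1) \<open>G \<subseteq> F\<close> \<open>F \<subseteq> {..m}\<close> F(2) U in auto)
  qed
  then show ?thesis using r by blast
qed

end

section \<open>The l1 lower estimate\<close>

lemma l1_lower_estimate_of_functionals:
  fixes z :: "nat \<Rightarrow> 'a::real_normed_vector" and \<alpha> :: "nat \<Rightarrow> real" and f g :: "'a \<Rightarrow>\<^sub>L real"
  assumes pos: "norm f \<le> 1" "\<forall>i\<in>F. 0 < \<alpha> i \<longrightarrow> b \<le> f (z i)" "\<forall>i\<in>F. \<not> 0 < \<alpha> i \<longrightarrow> f (z i) \<le> \<eta>"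
    and neg: "norm g \<le> 1" "\<forall>i\<in>F. \<alpha> i < 0 \<longrightarrow> b \<le> g (z i)" "\<forall>i\<in>F. \<not> \<alpha> i < 0 \<longrightarrow> g (z i) \<le> \<eta>"
  shows "(b - \<eta>) / 2 * (\<Sum>i\<in>F. \<bar>\<alpha> i\<bar>) \<le> norm (\<Sum>i\<in>F. \<alpha> i *\<^sub>R z i)"
proof -
  define v where "v = (\<Sum>i\<in>F. \<alpha> i *\<^sub>R z i)"
  have per_index: "(b - \<eta>) * \<bar>\<alpha> i\<bar> \<le> \<alpha> i * f (z i) - \<alpha> i * g (z i)" if "i \<in> F" for i
  proof (cases "0 < \<alpha> i")
    case True
    then have "\<alpha> i * b \<le> \<alpha> i * f (z i)" "\<alpha> i * g (z i) \<le> \<alpha> i * \<eta>"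
      using pos(2) neg(3) that by (simp_all add: mult_left_mono)
    moreover have "(b - \<eta>) * \<bar>\<alpha> i\<bar> = \<alpha> i * b - \<alpha> i * \<eta>" using True by (simp add: algebra_simps)
    ultimately show ?thesis by linarith
  next
    case False
    then have "\<alpha> i * \<eta> \<le> \<alpha> i * f (z i)"
      using pos(3) that by (intro mult_left_mono_neg) auto
    moreover have "\<alpha> i * g (z i) \<le> \<alpha> i * b"
      using neg(2) that False by (cases "\<alpha> i = 0") (auto intro: mult_left_mono_neg)
    moreover have "(b - \<eta>) * \<bar>\<alpha> i\<bar> = \<alpha> i * \<eta> - \<alpha> i * b" using False by (simp add: algebra_simps)
    ultimately show ?thesis by linarith
  qed
  have "(b - \<eta>) * (\<Sum>i\<in>F. \<bar>\<alpha> i\<bar>) \<le> f v - g v"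
    unfolding v_def sum_distrib_left
    by (simp add: blinfun.sum_right blinfun.scaleR_right sum_subtractf[symmetric] sum_mono per_index)
  also have "\<dots> \<le> 2 * norm v"
    using unit_blinfun_le_norm[OF pos(1), of v] unit_blinfun_le_norm[OF neg(1), of "- v"]
    by (simp add: blinfun.minus_right)
  finally show ?thesis unfolding v_def by simp
qed

lemma generates_l1_spreading_modelI:
  fixes z :: "nat \<Rightarrow> 'a::real_normed_vector"
  assumes "bounded (range z)"
    and functionals: "\<And>F G. finite F \<Longrightarrow> F \<noteq> {} \<Longrightarrow> card F \<le> Min F + 1 \<Longrightarrow> G \<subseteq> F \<Longrightarrow>
      \<exists>f::'a \<Rightarrow>\<^sub>L real. norm f \<le> 1 \<and> (\<forall>i\<in>G. b \<le> blinfun_apply f (z i)) \<and>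
        (\<forall>i\<in>F - G. blinfun_apply f (z i) \<le> \<eta>)"
  shows "generates_l1_spreading_model z ((b - \<eta>) / 2)"
  unfolding generates_l1_spreading_model_def
proof (intro conjI allI impI)
  fix F and \<alpha> :: "nat \<Rightarrow> real" assume F: "finite F \<and> F \<noteq> {} \<and> card F \<le> Min F + 1"
  obtain f :: "'a \<Rightarrow>\<^sub>L real" where f: "norm f \<le> 1" "\<forall>i\<in>{i\<in>F. 0 < \<alpha> i}. b \<le> f (z i)"
    "\<forall>i\<in>F - {i\<in>F. 0 < \<alpha> i}. f (z i) \<le> \<eta>"
    using functionals[of F "{i\<in>F. 0 < \<alpha> i}"] F by blast
  obtain g :: "'a \<Rightarrow>\<^sub>L real" where g: "norm g \<le> 1" "\<forall>i\<in>{i\<in>F. \<alpha> i < 0}. b \<le> g (z i)"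
    "\<forall>i\<in>F - {i\<in>F. \<alpha> i < 0}. g (z i) \<le> \<eta>"
    using functionals[of F "{i\<in>F. \<alpha> i < 0}"] F by blast
  have "\<forall>i\<in>F. 0 < \<alpha> i \<longrightarrow> b \<le> f (z i)" "\<forall>i\<in>F. \<not> 0 < \<alpha> i \<longrightarrow> f (z i) \<le> \<eta>"
    "\<forall>i\<in>F. \<alpha> i < 0 \<longrightarrow> b \<le> g (z i)" "\<forall>i\<in>F. \<not> \<alpha> i < 0 \<longrightarrow> g (z i) \<le> \<eta>"
    using f(2,3) g(2,3) by auto
  then show "(b - \<eta>) / 2 * (\<Sum>i\<in>F. \<bar>\<alpha> i\<bar>) \<le> norm (\<Sum>i\<in>F. \<alpha> i *\<^sub>R z i)"
    using l1_lower_estimate_of_functionals[OF f(1) _ _ g(1)] by blast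
qed (rule assms(1))

theorem lemma4p7:
  fixes x :: "nat \<Rightarrow> 'a::banach" and c :: real
  assumes "c > 0"
    and "weakly_converges x 0"
    and "wu_tilde x 0 > ereal c"
  shows "\<exists>r. strict_mono r \<and> generates_l1_spreading_model (x \<circ> r) (c / 2)"
proof -
  obtain b where "c < b" "ereal b < wu_tilde x 0" using ereal_dense2[OF assms(3)] by auto
  interpret spreading_construction x b "b - c"
    using assms(1,2) \<open>c < b\<close> wu_tilde_gt_imp_large_values[OF \<open>ereal b < wu_tilde x 0\<close>]
    by unfold_locales auto
  obtain r where r: "strict_mono r"
    and patterns: "\<forall>F G. finite F \<and> F \<noteq> {} \<and> card F \<le> Min F + 1 \<and> G \<subseteq> F \<longrightarrow>
      (\<exists>f. realizes f (r ` G) (r ` (F - G)))"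
    using exists_subsequence by blast
  have "bounded (range (x \<circ> r))"
    using weakly_convergent_imp_bounded[OF assms(2)] by (rule bounded_subset) auto
  then have "generates_l1_spreading_model (x \<circ> r) ((b - (b - c)) / 2)"
    by (rule generates_l1_spreading_modelI) (use patterns in \<open>auto simp: realizes_def\<close>)
  then show ?thesis using r by auto
qed

end
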